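(* Let $f\in\Gamma=\mathbb Q[p_1,p_3,p_5,\dots]$ be homogeneous of degree $n\ge1$, and write $$f=\sum_{\substack{\lambda\vdash n\\ \text{all parts odd}}}a_\lambda V_\lambda=\sum_{\lambda}b_\lambda P_\lambda,$$ the second sum over partitions $\lambda$ of $n$ into distinct parts. Then $\sum_\lambda a_\lambda=b_{(n)}$, the coefficient of the one-row function $P_n$.
   Context: Symmetric functions are in variables $x=(x_1,x_2,\dots)$ with rational coefficients, $p_k$ is the power sum, and $\Gamma=\mathbb Q[p_1,p_3,p_5,\dots]$. For a partition $\lambda$ with distinct parts, $P_\lambda$ is Schur's $P$-function (as in Macdonald, Ch. III.8); the $P_\lambda$ with $\lambda$ strict of size $n$ form a basis of the degree-$n$ part of $\Gamma$. The one-row functions satisfy $1+2\sum_{n\ge1}P_n(x)t^n=\prod_i\frac{1+x_it}{1-x_it}$. For any partition $\lambda$, $V_\lambda=P_{\lambda_1}P_{\lambda_2}\cdots$; the $V_\lambda$ with $\lambda$ having only odd parts form a basis of $\Gamma$. *)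

theory Defs
  imports "HOL-Combinatorics.Permutations" "HOL-Computational_Algebra.Formal_Power_Series"
begin

text \<open>A symmetric function is identified with its family of evaluations at finitely
many (rational) variables x_1,...,x_m, for every m.\<close>

definition partitions :: "nat \<Rightarrow> nat list set" where
  "partitions n = {lam. sorted_wrt (\<ge>) lam \<and> (\<forall>k\<in>set lam. 0 < k) \<and> sum_list lam = n}"

definition odd_partitions :: "nat \<Rightarrow> nat list set" where
  "odd_partitions n = {lam \<in> partitions n. \<forall>k\<in>set lam. odd k}"

definition strict_partitions :: "nat \<Rightarrow> nat list set" where
  "strict_partitions n = {lam. sorted_wrt (>) lam \<and> (\<forall>k\<in>set lam. 0 < k) \<and> sum_list lam = n}"

definition qgen :: "rat list \<Rightarrow> rat fps" where
  "qgen xs = prod_list (map (\<lambda>x. (1 + fps_const x * fps_X) / (1 - fps_const x * fps_X)) xs)"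

text \<open>One-row Schur P-function P_k (k \<ge> 1): 1 + 2 sum P_k t^k = qgen.\<close>
definition Prow :: "nat \<Rightarrow> rat list \<Rightarrow> rat" where
  "Prow k xs = fps_nth (qgen xs) k / 2"

definition Vfun :: "nat list \<Rightarrow> rat list \<Rightarrow> rat" where
  "Vfun lam xs = prod_list (map (\<lambda>k. Prow k xs) lam)"

text \<open>Schur P-function for strict lambda in m = length xs variables (Macdonald III.8):
  P_lambda = sum over w in S_m / S_{m-l} of w( x^lambda prod_{i<=l, i<j<=m} (x_i+x_j)/(x_i-x_j) ),
  written as (1/(m-l)!) times the sum over all of S_m; it is 0 if l > m.
  (The formula is evaluated at pairwise distinct variables.)\<close>
definition Pschur :: "nat list \<Rightarrow> rat list \<Rightarrow> rat" where
  "Pschur lam xs =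
    (let m = length xs; l = length lam in
     if l \<le> m then
       (1 / of_nat (fact (m - l))) *
       (\<Sum>w | w permutes {..<m}.
          (\<Prod>i<l. (xs ! w i) ^ (lam ! i)) *
          (\<Prod>i<l. \<Prod>j\<in>{i<..<m}. (xs ! w i + xs ! w j) / (xs ! w i - xs ! w j)))
     else 0)"

end

theory Submission
  imports Defs
begin

text \<open>Specialise the identity to the single variable x_1 = 1. Every one-row function
  then takes the value 1, so each V_lambda does; and a Schur P-function in one variable
  vanishes unless lambda has at most one part, which leaves only P_n.\<close>

lemma inverse_one_minus_const_fps_X:
  "inverse (1 - fps_const (c :: 'a :: field) * fps_X) = Abs_fps (\<lambda>n. c ^ n)"
proof (rule fps_inverse_unique, rule fps_ext)
  fix n
  show "fps_nth ((1 - fps_const c * fps_X) * Abs_fps (\<lambda>n. c ^ n)) n = fps_nth (1 :: 'a fps) n"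
    by (cases n) (simp_all add: algebra_simps)
qed

lemma qgen_singleton_nth:
  assumes "k \<ge> 1"
  shows "fps_nth (qgen [x]) k = 2 * x ^ k"
proof -
  have "qgen [x] = (1 + fps_const x * fps_X) * Abs_fps (\<lambda>n. x ^ n)"
    by (simp add: qgen_def fps_divide_unit inverse_one_minus_const_fps_X)
  then show ?thesis
    using assms by (cases k) (simp_all add: algebra_simps)
qed

lemma Prow_singleton: "k \<ge> 1 \<Longrightarrow> Prow k [x] = x ^ k"
  by (simp add: Prow_def qgen_singleton_nth)

lemma Vfun_singleton:
  assumes "\<forall>k\<in>set lam. 0 < k"
  shows "Vfun lam [x] = x ^ sum_list lam"
  using assms by (induction lam) (simp_all add: Vfun_def Prow_singleton power_add)

lemma Pschur_singleton_one_row: "Pschur [k] [x] = x ^ k"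
proof -
  have "{w. w permutes {..<Suc 0}} = {id}"
    by (simp add: lessThan_Suc)
  then show ?thesis by (simp add: Pschur_def)
qed

lemma Pschur_singleton_long: "length lam > 1 \<Longrightarrow> Pschur lam [x] = 0"
  by (simp add: Pschur_def)

lemma one_row_in_strict_partitions: "n \<ge> 1 \<Longrightarrow> [n] \<in> strict_partitions n"
  by (simp add: strict_partitions_def)

lemma strict_partitions_length_gt_one:
  assumes "lam \<in> strict_partitions n" "n \<ge> 1" "lam \<noteq> [n]"
  shows "length lam > 1"
  using assms by (cases lam; cases "tl lam") (auto simp: strict_partitions_def)

lemma Pschur_singleton:
  assumes "lam \<in> strict_partitions n" "n \<ge> 1"
  shows "Pschur lam [x] = (if lam = [n] then x ^ n else 0)"
  using assms strict_partitions_length_gt_one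
  by (auto simp: Pschur_singleton_one_row Pschur_singleton_long)

lemma finite_strict_partitions: "finite (strict_partitions n)"
proof (rule finite_subset)
  have "length lam \<le> sum_list lam" if "\<forall>k\<in>set lam. (0::nat) < k" for lam
    using that by (induction lam) auto
  then show "strict_partitions n \<subseteq> {lam. set lam \<subseteq> {..n} \<and> length lam \<le> n}"
    using member_le_sum_list by (fastforce simp: strict_partitions_def)
  show "finite {lam. set lam \<subseteq> {..n} \<and> length lam \<le> n}"
    by (intro finite_lists_length_le) simp
qed

theorem lemma3p5:
  fixes n :: nat and a b :: "nat list \<Rightarrow> rat"
  assumes "n \<ge> 1"
    and "\<forall>xs :: rat list. distinct xs \<longrightarrow>
           (\<Sum>lam\<in>odd_partitions n. a lam * Vfun lam xs)
         = (\<Sum>lam\<in>strict_partitions n. b lam * Pschur lam xs)"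
  shows "(\<Sum>lam\<in>odd_partitions n. a lam) = b [n]"
proof -
  have "(\<Sum>lam\<in>odd_partitions n. a lam)
      = (\<Sum>lam\<in>odd_partitions n. a lam * Vfun lam [1])"
    by (intro sum.cong) (auto simp: Vfun_singleton odd_partitions_def partitions_def)
  also have "\<dots> = (\<Sum>lam\<in>strict_partitions n. b lam * Pschur lam [1])"
    using assms(2) by simp
  also have "\<dots> = (\<Sum>lam\<in>strict_partitions n. if lam = [n] then b lam else 0)"
    using assms(1) by (intro sum.cong) (auto simp: Pschur_singleton)
  also have "\<dots> = b [n]"
    using one_row_in_strict_partitions[OF assms(1)] by (simp add: finite_strict_partitions)
  finally show ?thesis .
qed

end
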